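(* Let $\varepsilon=4\cdot(0.33)^3$. Then $$\varepsilon\, n^{-4}\cdot \max_{S\in\mathcal{S}_{2n}}F(S)\ \le\ \max_{\omega\in\mathbb{R}^{2n},\|\omega\|_2=1}\ \min_{\pi\in\Gamma_n}\sum_{i,j}\pi_{i,j}(M_{i,j}^{\top}\omega)^2\ \le\ \max_{S\in\mathcal{S}_{2n}}F(S).$$
   Context: Setting: $\mathcal{B}\subseteq\mathbb{R}^d$, $K$ a symmetric positive definite kernel on $\mathcal{B}$, points $x_1,\dots,x_n,y_1,\dots,y_n\in\mathcal{B}$. $G=\begin{pmatrix}K(x^n,x^n)&-K(x^n,y^n)\\-K(y^n,x^n)&K(y^n,y^n)\end{pmatrix}$ (with $K(x^n,y^n)=(K(x_i,y_j))_{i,j}$ etc.) is assumed positive definite, $G^{-1}=UU^{\top}$ is its Cholesky decomposition; $M'_{i,j}\in\mathbb{R}^{2n}$ has first $n$ entries $(K(x_i,x_l)-K(y_j,x_l))_{l\in[n]}$ and last $n$ entries $(K(y_j,y_l)-K(x_i,y_l))_{l\in[n]}$; $M_{i,j}=U^{\top}M'_{i,j}$. $\Gamma_n=\{\pi\in\mathbb{R}_+^{n\times n}:$ all row and column sums $1/n\}$, $\langle A,B\rangle=\mathrm{Trace}(A^{\top}B)$, $F(S)=\min_{\pi\in\Gamma_n}\sum_{i,j}\pi_{i,j}\langle M_{i,j}M_{i,j}^{\top},S\rangle$, $\mathcal{S}_{2n}=\{S\in\mathbb{S}^{2n}_+:\mathrm{Trace}(S)=1\}$. The middle quantity equals $\mathcal{KMS}_2(\widehat\mu_n,\widehat\nu_n)^2$,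 where $\widehat\mu_n=\frac1n\sum_i\delta_{x_i}$, $\widehat\nu_n=\frac1n\sum_i\delta_{y_i}$ and $\mathcal{KMS}_2(\mu,\nu)=\sup_{f\in\mathcal{H},\|f\|_{\mathcal{H}}\le1}W_2(f_{\#}\mu,f_{\#}\nu)$ with $\mathcal{H}$ the RKHS of $K$. *)

theory Defs
  imports "HOL-Analysis.Analysis"
begin

text \<open>Matrices of size m x m are represented as functions nat => nat => real,
  only the entries with indices < m being relevant; vectors of R^m as nat => real.\<close>

definition pd_kernel :: "('a \<Rightarrow> 'a \<Rightarrow> real) \<Rightarrow> 'a set \<Rightarrow> bool" where
  "pd_kernel K B \<longleftrightarrow>
     (\<forall>u\<in>B. \<forall>v\<in>B. K u v = K v u) \<and>
     (\<forall>m (z :: nat \<Rightarrow> 'a) (c :: nat \<Rightarrow> real). (\<forall>i<m. z i \<in> B) \<longrightarrow>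
        (\<Sum>i<m. \<Sum>j<m. c i * c j * K (z i) (z j)) \<ge> 0)"

definition pd_matrix :: "nat \<Rightarrow> (nat \<Rightarrow> nat \<Rightarrow> real) \<Rightarrow> bool" where
  "pd_matrix m A \<longleftrightarrow> (\<forall>i<m. \<forall>j<m. A i j = A j i) \<and>
     (\<forall>v. (\<exists>i<m. v i \<noteq> 0) \<longrightarrow> (\<Sum>i<m. \<Sum>j<m. v i * A i j * v j) > 0)"

definition psd_matrix :: "nat \<Rightarrow> (nat \<Rightarrow> nat \<Rightarrow> real) \<Rightarrow> bool" where
  "psd_matrix m A \<longleftrightarrow> (\<forall>i<m. \<forall>j<m. A i j = A j i) \<and>
     (\<forall>v. (\<Sum>i<m. \<Sum>j<m. v i * A i j * v j) \<ge> 0)"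

definition Gmat :: "('a \<Rightarrow> 'a \<Rightarrow> real) \<Rightarrow> nat \<Rightarrow> (nat \<Rightarrow> 'a) \<Rightarrow> (nat \<Rightarrow> 'a) \<Rightarrow> nat \<Rightarrow> nat \<Rightarrow> real" where
  "Gmat K n x y l m =
     (if l < n \<and> m < n then K (x l) (x m)
      else if l < n then - K (x l) (y (m - n))
      else if m < n then - K (y (l - n)) (x m)
      else K (y (l - n)) (y (m - n)))"

definition cholesky_of_inverse :: "nat \<Rightarrow> (nat \<Rightarrow> nat \<Rightarrow> real) \<Rightarrow> (nat \<Rightarrow> nat \<Rightarrow> real) \<Rightarrow> bool" where
  "cholesky_of_inverse m G U \<longleftrightarrow>
     (\<forall>i<m. \<forall>j<m. i < j \<longrightarrow> U i j = 0) \<and> (\<forall>i<m. U i i > 0) \<and>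
     (\<forall>i<m. \<forall>j<m. (\<Sum>k<m. G i k * (\<Sum>l<m. U k l * U j l)) = (if i = j then 1 else 0))"

definition Mprime :: "('a \<Rightarrow> 'a \<Rightarrow> real) \<Rightarrow> nat \<Rightarrow> (nat \<Rightarrow> 'a) \<Rightarrow> (nat \<Rightarrow> 'a) \<Rightarrow> nat \<Rightarrow> nat \<Rightarrow> nat \<Rightarrow> real" where
  "Mprime K n x y i j l =
     (if l < n then K (x i) (x l) - K (y j) (x l)
      else K (y j) (y (l - n)) - K (x i) (y (l - n)))"

definition Mvec :: "('a \<Rightarrow> 'a \<Rightarrow> real) \<Rightarrow> nat \<Rightarrow> (nat \<Rightarrow> 'a) \<Rightarrow> (nat \<Rightarrow> 'a) \<Rightarrow> (nat \<Rightarrow> nat \<Rightarrow> real) \<Rightarrow> nat \<Rightarrow> nat \<Rightarrow> nat \<Rightarrow> real" where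
  "Mvec K n x y U i j k = (\<Sum>l<2*n. U l k * Mprime K n x y i j l)"

definition Gamma :: "nat \<Rightarrow> (nat \<Rightarrow> nat \<Rightarrow> real) set" where
  "Gamma n = {\<pi>. (\<forall>i<n. \<forall>j<n. \<pi> i j \<ge> 0) \<and>
                  (\<forall>i<n. (\<Sum>j<n. \<pi> i j) = 1 / real n) \<and>
                  (\<forall>j<n. (\<Sum>i<n. \<pi> i j) = 1 / real n)}"

definition Sset :: "nat \<Rightarrow> (nat \<Rightarrow> nat \<Rightarrow> real) set" where
  "Sset m = {S. psd_matrix m S \<and> (\<Sum>k<m. S k k) = 1}"

definition Ffun :: "('a \<Rightarrow> 'a \<Rightarrow> real) \<Rightarrow> nat \<Rightarrow> (nat \<Rightarrow> 'a) \<Rightarrow> (nat \<Rightarrow> 'a) \<Rightarrow> (nat \<Rightarrow> nat \<Rightarrow> real) \<Rightarrow> (nat \<Rightarrow> nat \<Rightarrow> real) \<Rightarrow> real" where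
  "Ffun K n x y U S = (INF \<pi>\<in>Gamma n. \<Sum>i<n. \<Sum>j<n. \<pi> i j *
      (\<Sum>k<2*n. \<Sum>l<2*n. Mvec K n x y U i j k * Mvec K n x y U i j l * S k l))"

definition middle :: "('a \<Rightarrow> 'a \<Rightarrow> real) \<Rightarrow> nat \<Rightarrow> (nat \<Rightarrow> 'a) \<Rightarrow> (nat \<Rightarrow> 'a) \<Rightarrow> (nat \<Rightarrow> nat \<Rightarrow> real) \<Rightarrow> real" where
  "middle K n x y U = (SUP \<omega>\<in>{\<omega>. (\<Sum>k<2*n. (\<omega> k)\<^sup>2) = 1}.
      INF \<pi>\<in>Gamma n. \<Sum>i<n. \<Sum>j<n. \<pi> i j * (\<Sum>k<2*n. Mvec K n x y U i j k * \<omega> k)\<^sup>2)"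

end

theory Submission
  imports Defs
begin

text \<open>Both F(S) and the middle quantity are optimal transport costs between the uniform
  measures on n points, with cost matrices <M_ij M_ij^T, S> and (M_ij^T w)^2 respectively.
  For a unit vector w the rank-one matrix w w^T lies in S_2n and turns the first cost into
  the second; this gives the upper bound.

  For the lower bound, normalise u_ij = M_ij / |M_ij| and pick signs e_ij maximising |x|,
  where x = sum e_ij u_ij. Flipping a single sign cannot increase |x|^2, which forces
  e_ij <x, u_ij> >= 1, while |x| <= n^2. Hence w = x / |x| satisfies
  |M_ij|^2 <= n^4 (M_ij^T w)^2 for all i, j. Since <M M^T, S> <= tr S |M|^2 = |M|^2 for
  S in S_2n, this yields F(S) <= n^4 times the middle quantity, i.e. the lower bound even with
  epsilon replaced by 1.\<close>

lemma exists_unit_vector: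
  assumes "m \<ge> 1"
  shows "\<exists>\<omega>::nat \<Rightarrow> real. (\<Sum>k<m. (\<omega> k)\<^sup>2) = 1"
proof
  have "(\<Sum>k<m. (if k = 0 then 1 else 0 :: real)\<^sup>2) = (\<Sum>k<m. if k = 0 then 1 else 0)"
    by (intro sum.cong) auto
  then show "(\<Sum>k<m. (if k = 0 then 1 else 0 :: real)\<^sup>2) = 1"
    using assms by simp
qed

lemma exists_sign_vector_correlated:
  fixes u :: "'p \<Rightarrow> nat \<Rightarrow> real"
  assumes P: "finite P"
  obtains e where "\<forall>p\<in>P. e p = 1 \<or> e p = -1"
    and "\<forall>p\<in>P. (\<Sum>k<m. (u p k)\<^sup>2) \<le> e p * (\<Sum>k<m. (\<Sum>q\<in>P. e q * u q k) * u p k)"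
proof -
  define E where "E = PiE P (\<lambda>_. {-1::real, 1})"
  define Q where "Q e = (\<Sum>k<m. (\<Sum>q\<in>P. e q * u q k)\<^sup>2)" for e
  have "finite E" "E \<noteq> {}"
    using P unfolding E_def by (auto intro: finite_PiE simp: PiE_eq_empty_iff)
  then obtain e where e: "e \<in> E" and Max: "Max (Q ` E) = Q e"
    by (rule obtains_MAX)
  have e_max: "Q e' \<le> Q e" if "e' \<in> E" for e'
    using Max \<open>finite E\<close> that by (metis Max_ge finite_imageI imageI)
  have sign: "e p = 1 \<or> e p = -1" if "p \<in> P" for p
    using e that unfolding E_def by (auto simp: PiE_iff)
  have "(\<Sum>k<m. (u p k)\<^sup>2) \<le> e p * (\<Sum>k<m. (\<Sum>q\<in>P. e q * u q k) * u p k)" if p: "p \<in> P" for p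
  proof -
    define e' where "e' = e(p := - e p)"
    have "e' \<in> E"
      using e p sign[OF p] unfolding E_def e'_def by (auto simp: PiE_iff extensional_def)
    have flip: "(\<Sum>q\<in>P. e' q * u q k) = (\<Sum>q\<in>P. e q * u q k) - 2 * e p * u p k" for k
    proof -
      have "e' q * u q k = e q * u q k - (if q = p then 2 * e p * u p k else 0)" for q
        by (simp add: e'_def)
      then show ?thesis
        using P p by (simp add: sum_subtractf)
    qed
    have "(e p)\<^sup>2 = 1"
      using sign[OF p] by auto
    then have "Q e' = Q e - 4 * e p * (\<Sum>k<m. (\<Sum>q\<in>P. e q * u q k) * u p k) + 4 * (\<Sum>k<m. (u p k)\<^sup>2)"
      unfolding Q_def flip
      by (simp add: power2_diff sum.distrib sum_subtractf sum_distrib_left algebra_simps)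
    with e_max[OF \<open>e' \<in> E\<close>] show ?thesis
      by simp
  qed
  with sign that show ?thesis
    by blast
qed

lemma sum_sq_signed_sum_le_card_sq:
  fixes u :: "'p \<Rightarrow> nat \<Rightarrow> real"
  assumes P: "finite P"
    and sign: "\<forall>p\<in>P. e p = 1 \<or> e p = -1"
    and u: "\<forall>p\<in>P. (\<Sum>k<m. (u p k)\<^sup>2) \<le> 1"
  shows "(\<Sum>k<m. (\<Sum>q\<in>P. e q * u q k)\<^sup>2) \<le> (real (card P))\<^sup>2"
proof -
  have sq: "(e q * u q k)\<^sup>2 = (u q k)\<^sup>2" if "q \<in> P" for q k
    using sign that by (auto simp: power_mult_distrib)
  have "(\<Sum>k<m. (\<Sum>q\<in>P. e q * u q k)\<^sup>2) \<le> (\<Sum>k<m. (\<Sum>q\<in>P. (e q * u q k)\<^sup>2) * card P)"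
    by (intro sum_mono sum_squared_le_sum_of_squares)
  also have "\<dots> = (\<Sum>q\<in>P. \<Sum>k<m. (u q k)\<^sup>2) * card P"
    by (simp add: sq sum_distrib_right sum.swap[of _ "{..<m}"] cong: sum.cong)
  also have "\<dots> \<le> (\<Sum>q\<in>P. 1 :: real) * card P"
    using u by (intro mult_right_mono sum_mono) auto
  finally show ?thesis
    by (simp add: power2_eq_square)
qed

lemma exists_unit_vector_correlated:
  fixes V :: "'p \<Rightarrow> nat \<Rightarrow> real"
  assumes P: "finite P" and m: "m \<ge> 1"
  obtains \<omega> where "(\<Sum>k<m. (\<omega> k)\<^sup>2) = 1"
    and "\<forall>p\<in>P. (\<Sum>k<m. (V p k)\<^sup>2) \<le> (real (card P))\<^sup>2 * (\<Sum>k<m. V p k * \<omega> k)\<^sup>2"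
proof -
  define nr where "nr p = sqrt (\<Sum>k<m. (V p k)\<^sup>2)" for p
  define u where "u p k = V p k / nr p" for p k
    \<comment> \<open>\<open>u p = 0\<close> if \<open>V p = 0\<close>, as \<open>x / 0 = 0\<close>\<close>
  have nr_sq: "(nr p)\<^sup>2 = (\<Sum>k<m. (V p k)\<^sup>2)" for p
    unfolding nr_def by (simp add: sum_nonneg)
  have u_sq: "(\<Sum>k<m. (u p k)\<^sup>2) = (if nr p = 0 then 0 else 1)" for p
    by (cases "nr p = 0") (simp_all add: u_def power_divide flip: sum_divide_distrib nr_sq)
  obtain e where sign: "\<forall>p\<in>P. e p = 1 \<or> e p = -1"
    and corr: "\<forall>p\<in>P. (\<Sum>k<m. (u p k)\<^sup>2) \<le> e p * (\<Sum>k<m. (\<Sum>q\<in>P. e q * u q k) * u p k)"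
    using exists_sign_vector_correlated[OF P] by blast
  define x where "x k = (\<Sum>q\<in>P. e q * u q k)" for k
  define Q where "Q = (\<Sum>k<m. (x k)\<^sup>2)"
  have Q_le: "Q \<le> (real (card P))\<^sup>2"
    unfolding Q_def x_def using P sign u_sq by (intro sum_sq_signed_sum_le_card_sq) auto
  have V_x: "(\<Sum>k<m. (V p k)\<^sup>2) \<le> (\<Sum>k<m. V p k * x k)\<^sup>2" if p: "p \<in> P" for p
  proof (cases "nr p = 0")
    case True
    then show ?thesis
      using nr_sq[of p] by simp
  next
    case False
    have "1 \<le> e p * (\<Sum>k<m. x k * u p k)"
      using corr[rule_format, OF p] u_sq[of p] False unfolding x_def by simp
    then have "1 \<le> \<bar>\<Sum>k<m. x k * u p k\<bar>"
      using sign p by auto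
    then have "1 \<le> (\<Sum>k<m. x k * u p k)\<^sup>2"
      by (metis abs_le_square_iff abs_one one_power2)
    moreover have "(\<Sum>k<m. V p k * x k) = nr p * (\<Sum>k<m. x k * u p k)"
      using False by (simp add: u_def sum_distrib_left mult.commute)
    ultimately show ?thesis
      using nr_sq[of p] mult_left_mono[of 1 _ "(nr p)\<^sup>2"] by (simp add: power_mult_distrib sum_nonneg)
  qed
  show ?thesis
  proof (cases "Q = 0")
    case True
    then have "x k = 0" if "k < m" for k
      using that unfolding Q_def by (simp add: sum_nonneg_eq_0_iff)
    then have "(\<Sum>k<m. (V p k)\<^sup>2) \<le> 0" if "p \<in> P" for p
      using V_x[OF that] by simp
    moreover obtain \<omega> :: "nat \<Rightarrow> real" where "(\<Sum>k<m. (\<omega> k)\<^sup>2) = 1"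
      using exists_unit_vector[OF m] by blast
    ultimately show ?thesis
      using that by (meson order_trans zero_le_mult_iff zero_le_power2)
  next
    case False
    then have Q_pos: "Q > 0"
      unfolding Q_def by (simp add: sum_nonneg order_neq_le_trans)
    define \<omega> where "\<omega> k = x k / sqrt Q" for k
    have "(\<Sum>k<m. (\<omega> k)\<^sup>2) = 1"
      using Q_pos unfolding \<omega>_def Q_def by (simp add: power_divide sum_nonneg flip: sum_divide_distrib)
    moreover have "(\<Sum>k<m. (V p k)\<^sup>2) \<le> (real (card P))\<^sup>2 * (\<Sum>k<m. V p k * \<omega> k)\<^sup>2" if "p \<in> P" for p
    proof -
      have "(\<Sum>k<m. (V p k)\<^sup>2) \<le> Q * (\<Sum>k<m. V p k * \<omega> k)\<^sup>2"
        using V_x[OF that] Q_pos unfolding \<omega>_def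
        by (simp add: power_divide flip: sum_divide_distrib)
      also have "\<dots> \<le> (real (card P))\<^sup>2 * (\<Sum>k<m. V p k * \<omega> k)\<^sup>2"
        using Q_le by (simp add: mult_right_mono)
      finally show ?thesis .
    qed
    ultimately show ?thesis
      using that by blast
  qed
qed

lemma psd_matrix_quadratic_form_nonneg:
  "psd_matrix m S \<Longrightarrow> 0 \<le> (\<Sum>k<m. \<Sum>l<m. v k * v l * S k l)"
  unfolding psd_matrix_def by (simp add: mult_ac)

lemma sum_diff_delta_mult:
  fixes f :: "nat \<Rightarrow> real"
  assumes "l < m" "j < m"
  shows "(\<Sum>a<m. ((if a = l then c else 0) - (if a = j then d else 0)) * f a) = c * f l - d * f j"
proof -
  have "((if a = l then c else 0) - (if a = j then d else 0)) * f a
      = (if a = l then c * f a else 0) - (if a = j then d * f a else 0)" for a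
    by (simp add: left_diff_distrib)
  then show ?thesis
    using assms by (simp add: sum_subtractf)
qed

lemma psd_matrix_two_point:
  assumes S: "psd_matrix m S" and jl: "j < m" "l < m"
  shows "2 * (v j * v l * S j l) \<le> (v j)\<^sup>2 * S l l + (v l)\<^sup>2 * S j j"
proof -
  define w where "w a = (if a = l then v j else 0) - (if a = j then v l else 0)" for a
  have "0 \<le> (\<Sum>a<m. \<Sum>b<m. w a * S a b * w b)"
    using S unfolding psd_matrix_def by blast
  also have "\<dots> = (\<Sum>a<m. w a * (\<Sum>b<m. w b * S a b))"
    by (simp add: sum_distrib_left mult_ac)
  also have "\<dots> = (\<Sum>a<m. w a * (v j * S a l - v l * S a j))"
    unfolding w_def using jl by (simp add: sum_diff_delta_mult)
  also have "\<dots> = v j * (v j * S l l - v l * S l j) - v l * (v j * S j l - v l * S j j)"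
    unfolding w_def using jl by (simp add: sum_diff_delta_mult)
  also have "\<dots> = (v j)\<^sup>2 * S l l + (v l)\<^sup>2 * S j j - 2 * (v j * v l * S j l)"
    using S jl unfolding psd_matrix_def by (simp add: power2_eq_square algebra_simps)
  finally show ?thesis
    by simp
qed

lemma psd_matrix_quadratic_form_le_trace:
  assumes S: "psd_matrix m S"
  shows "(\<Sum>k<m. \<Sum>l<m. v k * v l * S k l) \<le> (\<Sum>k<m. S k k) * (\<Sum>k<m. (v k)\<^sup>2)"
proof -
  have "2 * (\<Sum>k<m. \<Sum>l<m. v k * v l * S k l)
      \<le> (\<Sum>j<m. \<Sum>l<m. (v j)\<^sup>2 * S l l + (v l)\<^sup>2 * S j j)"
    unfolding sum_distrib_left using psd_matrix_two_point[OF S] by (intro sum_mono) auto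
  also have "\<dots> = (\<Sum>j<m. \<Sum>l<m. (v j)\<^sup>2 * S l l) + (\<Sum>j<m. \<Sum>l<m. (v l)\<^sup>2 * S j j)"
    by (simp only: sum.distrib)
  also have "\<dots> = 2 * ((\<Sum>k<m. S k k) * (\<Sum>k<m. (v k)\<^sup>2))"
    by (simp add: mult.commute flip: sum_distrib_left sum_distrib_right)
  finally show ?thesis
    by simp
qed

lemma quadratic_form_rank_one:
  "(\<Sum>k<m. \<Sum>l<m. v k * v l * (\<omega> k * \<omega> l)) = (\<Sum>k<m. v k * \<omega> k :: real)\<^sup>2"
  by (simp add: power2_eq_square sum_distrib_left sum_distrib_right mult_ac)

lemma rank_one_in_Sset:
  assumes "(\<Sum>k<m. (\<omega> k)\<^sup>2) = 1"
  shows "(\<lambda>k l. \<omega> k * \<omega> l) \<in> Sset m"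
proof -
  have "(\<Sum>k<m. \<Sum>l<m. v k * (\<omega> k * \<omega> l) * v l) = (\<Sum>k<m. v k * \<omega> k)\<^sup>2" for v
    using quadratic_form_rank_one[where v = v and \<omega> = \<omega> and m = m] by (simp add: mult_ac)
  then show ?thesis
    using assms unfolding Sset_def psd_matrix_def by (simp add: power2_eq_square)
qed

definition plan_cost :: "nat \<Rightarrow> (nat \<Rightarrow> nat \<Rightarrow> real) \<Rightarrow> (nat \<Rightarrow> nat \<Rightarrow> real) \<Rightarrow> real" where
  "plan_cost n c \<pi> = (\<Sum>i<n. \<Sum>j<n. \<pi> i j * c i j)"

definition ot_cost :: "nat \<Rightarrow> (nat \<Rightarrow> nat \<Rightarrow> real) \<Rightarrow> real" where
  "ot_cost n c = (INF \<pi>\<in>Gamma n. plan_cost n c \<pi>)"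

lemma uniform_plan_in_Gamma: "(\<lambda>i j. 1 / (real n)\<^sup>2) \<in> Gamma n"
  unfolding Gamma_def by (auto simp: power2_eq_square)

lemma plan_cost_nonneg:
  "\<pi> \<in> Gamma n \<Longrightarrow> \<forall>i<n. \<forall>j<n. 0 \<le> c i j \<Longrightarrow> 0 \<le> plan_cost n c \<pi>"
  unfolding plan_cost_def Gamma_def by (auto intro!: sum_nonneg)

lemma ot_cost_nonneg:
  "\<forall>i<n. \<forall>j<n. 0 \<le> c i j \<Longrightarrow> 0 \<le> ot_cost n c"
  unfolding ot_cost_def using uniform_plan_in_Gamma plan_cost_nonneg
  by (metis cINF_greatest empty_iff)

lemma ot_cost_le_scaled:
  assumes a: "a > 0"
    and c_nonneg: "\<forall>i<n. \<forall>j<n. 0 \<le> c i j"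
    and c_le: "\<forall>i<n. \<forall>j<n. c i j \<le> a * d i j"
  shows "ot_cost n c \<le> a * ot_cost n d"
proof -
  have "ot_cost n c / a \<le> ot_cost n d"
    unfolding ot_cost_def[of n d]
  proof (rule cINF_greatest)
    show "Gamma n \<noteq> {}"
      using uniform_plan_in_Gamma by blast
  next
    fix \<pi> assume \<pi>: "\<pi> \<in> Gamma n"
    have "ot_cost n c \<le> plan_cost n c \<pi>"
      unfolding ot_cost_def using \<pi> plan_cost_nonneg[OF _ c_nonneg]
      by (intro cINF_lower bdd_belowI2) auto
    also have "\<dots> \<le> plan_cost n (\<lambda>i j. a * d i j) \<pi>"
      unfolding plan_cost_def using \<pi> c_le
      by (intro sum_mono mult_left_mono) (auto simp: Gamma_def)
    also have "\<dots> = a * plan_cost n d \<pi>"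
      by (simp add: plan_cost_def sum_distrib_left mult_ac)
    finally show "ot_cost n c / a \<le> plan_cost n d \<pi>"
      using a by (simp add: pos_divide_le_eq mult.commute)
  qed
  then show ?thesis
    using a by (simp add: pos_divide_le_eq mult.commute)
qed

lemma ot_cost_quadratic_form_le_sq_norm:
  fixes M :: "nat \<Rightarrow> nat \<Rightarrow> nat \<Rightarrow> real"
  assumes "S \<in> Sset m"
  shows "ot_cost n (\<lambda>i j. \<Sum>k<m. \<Sum>l<m. M i j k * M i j l * S k l)
    \<le> ot_cost n (\<lambda>i j. \<Sum>k<m. (M i j k)\<^sup>2)"
  using assms psd_matrix_quadratic_form_le_trace[of m S] psd_matrix_quadratic_form_nonneg[of m S]
  by (intro ot_cost_le_scaled[of 1, simplified]) (auto simp: Sset_def)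

lemma ot_cost_unit_le_SUP_Sset:
  fixes M :: "nat \<Rightarrow> nat \<Rightarrow> nat \<Rightarrow> real"
  assumes "(\<Sum>k<m. (\<omega> k)\<^sup>2) = 1"
  shows "ot_cost n (\<lambda>i j. (\<Sum>k<m. M i j k * \<omega> k)\<^sup>2)
    \<le> (SUP S\<in>Sset m. ot_cost n (\<lambda>i j. \<Sum>k<m. \<Sum>l<m. M i j k * M i j l * S k l))"
proof -
  have "ot_cost n (\<lambda>i j. (\<Sum>k<m. M i j k * \<omega> k)\<^sup>2)
      = ot_cost n (\<lambda>i j. \<Sum>k<m. \<Sum>l<m. M i j k * M i j l * (\<omega> k * \<omega> l))"
    by (simp add: quadratic_form_rank_one)
  also have "\<dots> \<le> (SUP S\<in>Sset m. ot_cost n (\<lambda>i j. \<Sum>k<m. \<Sum>l<m. M i j k * M i j l * S k l))"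
    using rank_one_in_Sset[OF assms] ot_cost_quadratic_form_le_sq_norm
    by (intro cSUP_upper bdd_aboveI2) auto
  finally show ?thesis .
qed

lemma SUP_unit_le_SUP_Sset:
  fixes M :: "nat \<Rightarrow> nat \<Rightarrow> nat \<Rightarrow> real"
  assumes "m \<ge> 1"
  shows "(SUP \<omega>\<in>{\<omega>. (\<Sum>k<m. (\<omega> k)\<^sup>2) = 1}. ot_cost n (\<lambda>i j. (\<Sum>k<m. M i j k * \<omega> k)\<^sup>2))
    \<le> (SUP S\<in>Sset m. ot_cost n (\<lambda>i j. \<Sum>k<m. \<Sum>l<m. M i j k * M i j l * S k l))"
  using exists_unit_vector[OF assms] ot_cost_unit_le_SUP_Sset
  by (intro cSUP_least) auto

lemma SUP_Sset_nonneg: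
  fixes M :: "nat \<Rightarrow> nat \<Rightarrow> nat \<Rightarrow> real"
  assumes "m \<ge> 1"
  shows "0 \<le> (SUP S\<in>Sset m. ot_cost n (\<lambda>i j. \<Sum>k<m. \<Sum>l<m. M i j k * M i j l * S k l))"
proof -
  obtain \<omega> :: "nat \<Rightarrow> real" where "(\<Sum>k<m. (\<omega> k)\<^sup>2) = 1"
    using exists_unit_vector[OF assms] by blast
  then show ?thesis
    using ot_cost_unit_le_SUP_Sset ot_cost_nonneg[of n "\<lambda>i j. (\<Sum>k<m. M i j k * \<omega> k)\<^sup>2"]
    by (meson order_trans zero_le_power2)
qed

lemma exists_unit_vector_dominating_Sset:
  fixes M :: "nat \<Rightarrow> nat \<Rightarrow> nat \<Rightarrow> real"
  assumes m: "m \<ge> 1" and n: "n \<ge> 1"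
  obtains \<omega> where "(\<Sum>k<m. (\<omega> k)\<^sup>2) = 1"
    and "\<forall>S\<in>Sset m. ot_cost n (\<lambda>i j. \<Sum>k<m. \<Sum>l<m. M i j k * M i j l * S k l)
      \<le> (real n)^4 * ot_cost n (\<lambda>i j. (\<Sum>k<m. M i j k * \<omega> k)\<^sup>2)"
proof -
  obtain \<omega> where \<omega>: "(\<Sum>k<m. (\<omega> k)\<^sup>2) = 1"
    and corr: "\<forall>p\<in>{..<n} \<times> {..<n}. (\<Sum>k<m. (M (fst p) (snd p) k)\<^sup>2)
      \<le> (real (card ({..<n} \<times> {..<n})))\<^sup>2 * (\<Sum>k<m. M (fst p) (snd p) k * \<omega> k)\<^sup>2"
    using exists_unit_vector_correlated[of "{..<n} \<times> {..<n}" m "\<lambda>p. M (fst p) (snd p)"] m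
    by blast
  have card: "(real (card ({..<n} \<times> {..<n})))\<^sup>2 = (real n)^4"
    by (simp add: power2_eq_square eval_nat_numeral)
  have "ot_cost n (\<lambda>i j. \<Sum>k<m. \<Sum>l<m. M i j k * M i j l * S k l)
      \<le> (real n)^4 * ot_cost n (\<lambda>i j. (\<Sum>k<m. M i j k * \<omega> k)\<^sup>2)"
    if S: "S \<in> Sset m" for S
  proof -
    have psd: "psd_matrix m S" and trace: "(\<Sum>k<m. S k k) = 1"
      using S unfolding Sset_def by auto
    have "(\<Sum>k<m. \<Sum>l<m. M i j k * M i j l * S k l) \<le> (real n)^4 * (\<Sum>k<m. M i j k * \<omega> k)\<^sup>2"
      if "i < n" "j < n" for i j
    proof -
      have "(\<Sum>k<m. \<Sum>l<m. M i j k * M i j l * S k l) \<le> (\<Sum>k<m. (M i j k)\<^sup>2)"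
        using psd_matrix_quadratic_form_le_trace[OF psd, of "M i j"] trace by simp
      also have "\<dots> \<le> (real n)^4 * (\<Sum>k<m. M i j k * \<omega> k)\<^sup>2"
        using corr that card by auto
      finally show ?thesis .
    qed
    then show ?thesis
      using n psd_matrix_quadratic_form_nonneg[OF psd] by (intro ot_cost_le_scaled) auto
  qed
  with \<omega> that show ?thesis
    by blast
qed

lemma SUP_Sset_le_SUP_unit:
  fixes M :: "nat \<Rightarrow> nat \<Rightarrow> nat \<Rightarrow> real"
  assumes m: "m \<ge> 1" and n: "n \<ge> 1"
  shows "(SUP S\<in>Sset m. ot_cost n (\<lambda>i j. \<Sum>k<m. \<Sum>l<m. M i j k * M i j l * S k l))
    \<le> (real n)^4 * (SUP \<omega>\<in>{\<omega>. (\<Sum>k<m. (\<omega> k)\<^sup>2) = 1}. ot_cost n (\<lambda>i j. (\<Sum>k<m. M i j k * \<omega> k)\<^sup>2))"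
proof -
  obtain \<omega> where \<omega>: "(\<Sum>k<m. (\<omega> k)\<^sup>2) = 1"
    and dom: "\<forall>S\<in>Sset m. ot_cost n (\<lambda>i j. \<Sum>k<m. \<Sum>l<m. M i j k * M i j l * S k l)
      \<le> (real n)^4 * ot_cost n (\<lambda>i j. (\<Sum>k<m. M i j k * \<omega> k)\<^sup>2)"
    using exists_unit_vector_dominating_Sset[OF m n] by blast
  have "ot_cost n (\<lambda>i j. (\<Sum>k<m. M i j k * \<omega> k)\<^sup>2)
      \<le> (SUP \<omega>\<in>{\<omega>. (\<Sum>k<m. (\<omega> k)\<^sup>2) = 1}. ot_cost n (\<lambda>i j. (\<Sum>k<m. M i j k * \<omega> k)\<^sup>2))"
    using \<omega> ot_cost_unit_le_SUP_Sset by (intro cSUP_upper bdd_aboveI2) auto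
  then have "ot_cost n (\<lambda>i j. \<Sum>k<m. \<Sum>l<m. M i j k * M i j l * S k l)
      \<le> (real n)^4 * (SUP \<omega>\<in>{\<omega>. (\<Sum>k<m. (\<omega> k)\<^sup>2) = 1}. ot_cost n (\<lambda>i j. (\<Sum>k<m. M i j k * \<omega> k)\<^sup>2))"
    if "S \<in> Sset m" for S
    using order_trans[OF dom[rule_format, OF that] mult_left_mono] by simp
  moreover have "Sset m \<noteq> {}"
    using rank_one_in_Sset[OF \<omega>] by blast
  ultimately show ?thesis
    by (intro cSUP_least) auto
qed

theorem theorem4p7:
  fixes B :: "(real ^ 'd) set" and K :: "real ^ 'd \<Rightarrow> real ^ 'd \<Rightarrow> real"
    and n :: nat and x y :: "nat \<Rightarrow> real ^ 'd" and U :: "nat \<Rightarrow> nat \<Rightarrow> real"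
    and \<epsilon> :: real
  assumes "n \<ge> 1"
    and "pd_kernel K B"
    and "\<forall>i<n. x i \<in> B" and "\<forall>i<n. y i \<in> B"
    and "pd_matrix (2*n) (Gmat K n x y)"
    and "cholesky_of_inverse (2*n) (Gmat K n x y) U"
    and "\<epsilon> = 4 * (33/100)^3"
  shows "\<epsilon> * real n powi (-4) * (SUP S\<in>Sset (2*n). Ffun K n x y U S) \<le> middle K n x y U
       \<and> middle K n x y U \<le> (SUP S\<in>Sset (2*n). Ffun K n x y U S)"
proof -
  define M where "M = Mvec K n x y U"
  have F: "Ffun K n x y U S = ot_cost n (\<lambda>i j. \<Sum>k<2*n. \<Sum>l<2*n. M i j k * M i j l * S k l)" for S
    unfolding Ffun_def ot_cost_def plan_cost_def M_def ..
  have mid: "middle K n x y U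
      = (SUP \<omega>\<in>{\<omega>. (\<Sum>k<2*n. (\<omega> k)\<^sup>2) = 1}. ot_cost n (\<lambda>i j. (\<Sum>k<2*n. M i j k * \<omega> k)\<^sup>2))"
    unfolding middle_def ot_cost_def plan_cost_def M_def ..
  have m: "2 * n \<ge> 1"
    using assms(1) by simp
  let ?F = "SUP S\<in>Sset (2*n). Ffun K n x y U S"
  have upper: "middle K n x y U \<le> ?F"
    unfolding F mid by (rule SUP_unit_le_SUP_Sset[OF m])
  have lower: "?F \<le> (real n)^4 * middle K n x y U"
    unfolding F mid by (rule SUP_Sset_le_SUP_unit[OF m assms(1)])
  have "0 \<le> ?F"
    unfolding F by (rule SUP_Sset_nonneg[OF m])
  moreover have "\<epsilon> \<le> 1"
    using assms(7) by (simp add: eval_nat_numeral)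
  ultimately have "\<epsilon> * real n powi (-4) * ?F \<le> real n powi (-4) * ?F"
    using mult_right_mono[of \<epsilon> 1 "real n powi (-4) * ?F"] by (simp add: mult.assoc)
  also have "\<dots> \<le> middle K n x y U"
    using lower assms(1) by (simp add: power_int_minus field_simps)
  finally show ?thesis
    using upper by blast
qed

end
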